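(* Let $n\ge d$, $\mathbf X\in\mathbb R^{n\times d}$ with full column rank, $1\le k<d$, and $\mathbf y\in\mathbb R^n$ with $\hat\sigma_{1:k}=\|(\mathbf I-\mathbf P_{-1:k})\mathbf y\|>0$. Let $\hat{\boldsymbol\beta}_{\mathrm{OLS}}=(\mathbf X^T\mathbf X)^{-1}\mathbf X^T\mathbf y$ and $\mathbf u=\mathbf V^T(\mathbf y-\mathbf P_{-1:k}\mathbf y)/\hat\sigma_{1:k}$. Then $$\hat{\boldsymbol\beta}_{1:k,\mathrm{OLS}}=\hat\sigma_{1:k}(\mathbf V_{1:k}^T\mathbf X_{1:k})^{-1}\mathbf u_{1:k}.$$
   Context: $\mathbf A_i$, $\mathbf A_{1:i}$, $\mathbf A_{-1:i}$ denote the $i$-th column, first $i$ columns, and submatrix with first $i$ columns removed (similarly for vector entries). $\mathbf P_{-1:i}$ is the orthogonal projection onto the column space of $\mathbf X_{-1:i}$. $\mathbf V\in\mathbb R^{n\times(n-d+k)}$ has orthonormal columns spanning the orthogonal complement of the column space of $\mathbf X_{-1:k}$, with first $k$ columns $\mathbf V_i=(\mathbf I-\mathbf P_{-1:i})\mathbf X_i/\|(\mathbf I-\mathbf P_{-1:i})\mathbf X_i\|$. *)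

theory Defs
  imports "Jordan_Normal_Form.Matrix" "Jordan_Normal_Form.Gauss_Jordan_Elimination" "Jordan_Normal_Form.DL_Rank"
begin

text \<open>Matrices are JNF matrices with explicit dimensions. Columns are 0-indexed:
 paper column i (1-based) is JNF column i-1.\<close>

definition first_cols :: "nat \<Rightarrow> 'a mat \<Rightarrow> 'a mat" where
  "first_cols i A = mat (dim_row A) i (\<lambda>(r, c). A $$ (r, c))"

definition drop_cols :: "nat \<Rightarrow> 'a mat \<Rightarrow> 'a mat" where
  "drop_cols i A = mat (dim_row A) (dim_col A - i) (\<lambda>(r, c). A $$ (r, c + i))"

definition first_entries :: "nat \<Rightarrow> 'a vec \<Rightarrow> 'a vec" where
  "first_entries i v = vec i (\<lambda>j. v $ j)"

definition col_space :: "'a :: semiring_0 mat \<Rightarrow> 'a vec set" where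
  "col_space A = {A *\<^sub>v x | x. x \<in> carrier_vec (dim_col A)}"

definition proj_mat :: "real mat \<Rightarrow> real mat" where
  "proj_mat A = (THE P. P \<in> carrier_mat (dim_row A) (dim_row A) \<and>
     (\<forall>v \<in> carrier_vec (dim_row A). P *\<^sub>v v \<in> col_space A \<and>
        (\<forall>w \<in> col_space A. (v - P *\<^sub>v v) \<bullet> w = 0)))"

definition vnorm :: "real vec \<Rightarrow> real" where
  "vnorm v = sqrt (v \<bullet> v)"

definition minv :: "real mat \<Rightarrow> real mat" where
  "minv A = the (mat_inverse A)"

end

theory Submission
  imports Defs
begin

(* Write y = X b + r with b the OLS estimate, so that r is orthogonal to the column space of X
   (normal equations). For i < k the column V_i is the normalised residual of X_i after projecting
   onto the later columns X_(i+1), ..., X_d: it lies in the column space of X, is orthogonal to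
   X_j for j > i, and V_i . X_i = |(I - P_(-1:i)) X_i| > 0. Hence
   V_(1:k)^T y = V_(1:k)^T X b = (V_(1:k)^T X_(1:k)) b_(1:k), and the k x k matrix on the right is
   lower triangular with positive diagonal, hence invertible. Finally V^T P_(-1:k) y = 0 because
   the columns of V are orthogonal to those of X_(-1:k), so V_(1:k)^T y = sigma u_(1:k). *)

lemma scalar_prod_self_eq_zero:
  fixes w :: "real vec"
  assumes "w \<in> carrier_vec n" and "w \<bullet> w = 0"
  shows "w = 0\<^sub>v n"
  using conjugate_square_eq_0_vec[of w n] assms by simp

lemma mult_unit_vec_eq_col:
  "(A :: 'a :: semiring_1 mat) \<in> carrier_mat n m \<Longrightarrow> j < m \<Longrightarrow> A *\<^sub>v unit_vec m j = col A j"
  by (intro eq_vecI) auto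

lemma mult_vec_in_col_space:
  "A \<in> carrier_mat n m \<Longrightarrow> x \<in> carrier_vec m \<Longrightarrow> A *\<^sub>v x \<in> col_space A"
  unfolding col_space_def by auto

lemma col_spaceE:
  assumes "A \<in> carrier_mat n m" and "w \<in> col_space A"
  obtains x where "x \<in> carrier_vec m" and "w = A *\<^sub>v x"
  using assms unfolding col_space_def by auto

lemma scalar_prod_mult_vec_cols:
  fixes A :: "'a :: comm_semiring_0 mat"
  assumes A: "A \<in> carrier_mat n m" and w: "w \<in> carrier_vec n" and x: "x \<in> carrier_vec m"
  shows "w \<bullet> (A *\<^sub>v x) = (\<Sum>j<m. (w \<bullet> col A j) * x $ j)"
proof -
  have "w \<bullet> (A *\<^sub>v x) = (A\<^sup>T *\<^sub>v w) \<bullet> x"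
    using transpose_vec_mult_scalar[OF A x w] by simp
  also have "\<dots> = (\<Sum>j<m. (w \<bullet> col A j) * x $ j)"
    using A w x by (auto simp: scalar_prod_def lessThan_atLeast0 mult.commute intro!: sum.cong)
  finally show ?thesis .
qed

lemma full_rank_mult_vec_eq_zero:
  fixes A :: "real mat"
  assumes A: "A \<in> carrier_mat n m" and rank: "vec_space.rank n A = m"
    and x: "x \<in> carrier_vec m" and Ax: "A *\<^sub>v x = 0\<^sub>v n"
  shows "x = 0\<^sub>v m"
proof -
  interpret vec_space "TYPE(real)" n .
  have distinct: "distinct (cols A)"
  proof (rule ccontr)
    assume "\<not> distinct (cols A)"
    then have "card (set (cols A)) < m"
      using A by (metis card_distinct cols_length card_length carrier_matD(2) nat_less_le)
    obtain S where S: "maximal S (\<lambda>T. T \<subseteq> set (cols A) \<and> lin_indpt T)"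
      using maximal_exists[of "\<lambda>T. T \<subseteq> set (cols A) \<and> lin_indpt T" "card (set (cols A))" "{}"]
      by (meson List.finite_set card_mono empty_iff empty_subsetI finite_lin_indpt2 rev_finite_subset)
    then have "card S \<le> card (set (cols A))" by (simp add: card_mono maximal_def)
    with \<open>card (set (cols A)) < m\<close> show False using rank_card_indpt[OF A S] rank by simp
  qed
  show ?thesis
    using lin_depI[OF A x _ Ax distinct] full_rank_lin_indpt[OF A rank distinct] by blast
qed

lemma det_nonzero_minv:
  fixes A :: "real mat"
  assumes A: "A \<in> carrier_mat n n" and "det A \<noteq> 0"
  shows "minv A \<in> carrier_mat n n" and "minv A * A = 1\<^sub>m n" and "A * minv A = 1\<^sub>m n"
proof -
  have "A \<in> Units (ring_mat TYPE(real) n ())"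
    by (rule det_non_zero_imp_unit[OF A \<open>det A \<noteq> 0\<close>])
  then obtain B where "mat_inverse A = Some B"
    using mat_inverse(1)[OF A, where b = "()"] by (cases "mat_inverse A") auto
  then show "minv A \<in> carrier_mat n n" and "minv A * A = 1\<^sub>m n" and "A * minv A = 1\<^sub>m n"
    using mat_inverse(2)[OF A] unfolding minv_def by auto
qed

lemma mult_vec_eq_smultD:
  fixes A :: "real mat"
  assumes A: "A \<in> carrier_mat n n" and det: "det A \<noteq> 0"
    and x: "x \<in> carrier_vec n" and b: "b \<in> carrier_vec n" and eq: "A *\<^sub>v x = c \<cdot>\<^sub>v b"
  shows "x = c \<cdot>\<^sub>v (minv A *\<^sub>v b)"
proof -
  note inverse = det_nonzero_minv[OF A det]
  have "x = (minv A * A) *\<^sub>v x" using inverse(2) x by simp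
  also have "\<dots> = minv A *\<^sub>v (c \<cdot>\<^sub>v b)" using inverse(1) A x eq by simp
  also have "\<dots> = c \<cdot>\<^sub>v (minv A *\<^sub>v b)" using mult_mat_vec[OF inverse(1) b] .
  finally show ?thesis .
qed

lemma det_lower_triangular_nonzero:
  fixes A :: "'a :: idom mat"
  assumes A: "A \<in> carrier_mat n n"
    and lower: "\<And>i j. i < j \<Longrightarrow> j < n \<Longrightarrow> A $$ (i, j) = 0"
    and diag: "\<And>i. i < n \<Longrightarrow> A $$ (i, i) \<noteq> 0"
  shows "det A \<noteq> 0"
  using det_lower_triangular[OF lower A] A diag by (simp add: prod_list_diag_prod)

lemma det_gram_nonzero:
  fixes A :: "real mat"
  assumes A: "A \<in> carrier_mat n m"
    and inj: "\<And>x. x \<in> carrier_vec m \<Longrightarrow> A *\<^sub>v x = 0\<^sub>v n \<Longrightarrow> x = 0\<^sub>v m"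
  shows "det (A\<^sup>T * A) \<noteq> 0"
proof
  assume "det (A\<^sup>T * A) = 0"
  then obtain x where x: "x \<in> carrier_vec m" "x \<noteq> 0\<^sub>v m" "(A\<^sup>T * A) *\<^sub>v x = 0\<^sub>v m"
    using det_0_iff_vec_prod_zero_field[of "A\<^sup>T * A" m] A by auto
  have "(A *\<^sub>v x) \<bullet> (A *\<^sub>v x) = (A\<^sup>T *\<^sub>v (A *\<^sub>v x)) \<bullet> x"
    using transpose_vec_mult_scalar[OF A x(1), of "A *\<^sub>v x"] A x by simp
  also have "\<dots> = 0" using x A by simp
  finally have "A *\<^sub>v x = 0\<^sub>v n" using scalar_prod_self_eq_zero A x by simp
  then show False using inj x by blast
qed

lemma gram_minv_carrier:
  fixes A :: "real mat"
  assumes A: "A \<in> carrier_mat n m"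
    and inj: "\<And>x. x \<in> carrier_vec m \<Longrightarrow> A *\<^sub>v x = 0\<^sub>v n \<Longrightarrow> x = 0\<^sub>v m"
  shows "minv (A\<^sup>T * A) \<in> carrier_mat m m"
proof -
  have "A\<^sup>T * A \<in> carrier_mat m m" using A by simp
  from det_nonzero_minv(1)[OF this det_gram_nonzero[OF A inj]] show ?thesis .
qed

lemma least_squares_residual_orth:
  fixes A :: "real mat"
  assumes A: "A \<in> carrier_mat n m"
    and inj: "\<And>x. x \<in> carrier_vec m \<Longrightarrow> A *\<^sub>v x = 0\<^sub>v n \<Longrightarrow> x = 0\<^sub>v m"
    and v: "v \<in> carrier_vec n" and w: "w \<in> col_space A"
  shows "(v - A *\<^sub>v (minv (A\<^sup>T * A) *\<^sub>v (A\<^sup>T *\<^sub>v v))) \<bullet> w = 0"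
proof -
  define \<beta> where "\<beta> = minv (A\<^sup>T * A) *\<^sub>v (A\<^sup>T *\<^sub>v v)"
  have gram: "A\<^sup>T * A \<in> carrier_mat m m" using A by simp
  note inverse = det_nonzero_minv[OF gram det_gram_nonzero[OF A inj]]
  have \<beta>: "\<beta> \<in> carrier_vec m" using inverse(1) A v by (simp add: \<beta>_def)
  have "A\<^sup>T *\<^sub>v (A *\<^sub>v \<beta>) = (A\<^sup>T * A) *\<^sub>v \<beta>"
    using A \<beta> by simp
  also have "\<dots> = ((A\<^sup>T * A) * minv (A\<^sup>T * A)) *\<^sub>v (A\<^sup>T *\<^sub>v v)"
    unfolding \<beta>_def by (rule assoc_mult_mat_vec[symmetric]) (use inverse(1) A v in auto)
  also have "\<dots> = A\<^sup>T *\<^sub>v v"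
    using inverse(3) A v by (metis one_mult_mat_vec transpose_carrier_mat mult_mat_vec_carrier)
  finally have normal: "A\<^sup>T *\<^sub>v (v - A *\<^sub>v \<beta>) = 0\<^sub>v m"
    using A v \<beta> by (simp add: mult_minus_distrib_mat_vec)
  obtain x where x: "x \<in> carrier_vec m" "w = A *\<^sub>v x" using col_spaceE[OF A w] .
  have "(v - A *\<^sub>v \<beta>) \<bullet> w = (A\<^sup>T *\<^sub>v (v - A *\<^sub>v \<beta>)) \<bullet> x"
    using transpose_vec_mult_scalar[OF A x(1), of "v - A *\<^sub>v \<beta>"] A v \<beta> x(2) by simp
  then show ?thesis using normal x(1) by (simp add: \<beta>_def)
qed

definition is_orth_proj :: "real mat \<Rightarrow> real mat \<Rightarrow> bool" where
  "is_orth_proj A P \<longleftrightarrow> P \<in> carrier_mat (dim_row A) (dim_row A) \<and>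
     (\<forall>v \<in> carrier_vec (dim_row A). P *\<^sub>v v \<in> col_space A \<and>
        (\<forall>w \<in> col_space A. (v - P *\<^sub>v v) \<bullet> w = 0))"

lemma col_space_minus:
  fixes A :: "real mat"
  assumes A: "A \<in> carrier_mat n m" and "a \<in> col_space A" and "b \<in> col_space A"
  shows "a - b \<in> col_space A"
proof -
  obtain x z where "x \<in> carrier_vec m" "a = A *\<^sub>v x" "z \<in> carrier_vec m" "b = A *\<^sub>v z"
    using col_spaceE[OF A] assms(2,3) by metis
  then show ?thesis
    using mult_vec_in_col_space[OF A, of "x - z"] mult_minus_distrib_mat_vec[OF A, of x z] by simp
qed

lemma is_orth_proj_unique:
  assumes A: "A \<in> carrier_mat n m" and P: "is_orth_proj A P" and Q: "is_orth_proj A Q"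
  shows "P = Q"
proof -
  have PQ: "P \<in> carrier_mat n n" "Q \<in> carrier_mat n n"
    using P Q A by (auto simp: is_orth_proj_def)
  have on_vecs: "P *\<^sub>v v = Q *\<^sub>v v" if v: "v \<in> carrier_vec n" for v
  proof -
    define D where "D = P *\<^sub>v v - Q *\<^sub>v v"
    have D: "D \<in> carrier_vec n" using PQ v by (simp add: D_def)
    have "D \<in> col_space A"
      unfolding D_def using col_space_minus[OF A] P Q v A by (simp add: is_orth_proj_def)
    then have "(v - Q *\<^sub>v v) \<bullet> D = 0" and "(v - P *\<^sub>v v) \<bullet> D = 0"
      using P Q v A by (simp_all add: is_orth_proj_def)
    moreover have "D = (v - Q *\<^sub>v v) - (v - P *\<^sub>v v)"
      unfolding D_def using PQ v by (intro eq_vecI) auto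
    ultimately have "D \<bullet> D = 0"
      using minus_scalar_prod_distrib[of "v - Q *\<^sub>v v" n "v - P *\<^sub>v v" D] PQ v D by simp
    then have "D = 0\<^sub>v n" using scalar_prod_self_eq_zero D by blast
    then have "D $ i = 0" if "i < n" for i using that by simp
    then show ?thesis
      using PQ v unfolding D_def by (intro eq_vecI) auto
  qed
  show ?thesis
  proof (rule eq_matI)
    fix i j assume "i < dim_row Q" "j < dim_col Q"
    then have "i < n" "j < n" using PQ by auto
    then show "P $$ (i, j) = Q $$ (i, j)"
      using on_vecs[of "unit_vec n j"] mult_unit_vec_eq_col PQ
      by (metis index_col carrier_matD unit_vec_carrier)
  qed (use PQ in auto)
qed

lemma is_orth_proj_exists:
  fixes A :: "real mat"
  assumes A: "A \<in> carrier_mat n m"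
    and inj: "\<And>x. x \<in> carrier_vec m \<Longrightarrow> A *\<^sub>v x = 0\<^sub>v n \<Longrightarrow> x = 0\<^sub>v m"
  shows "is_orth_proj A (A * minv (A\<^sup>T * A) * A\<^sup>T)"
proof -
  note inverse = gram_minv_carrier[OF A inj]
  have "(A * minv (A\<^sup>T * A) * A\<^sup>T) *\<^sub>v v = A *\<^sub>v (minv (A\<^sup>T * A) *\<^sub>v (A\<^sup>T *\<^sub>v v))"
    if "v \<in> carrier_vec n" for v
  proof -
    have "(A * minv (A\<^sup>T * A) * A\<^sup>T) *\<^sub>v v = (A * minv (A\<^sup>T * A)) *\<^sub>v (A\<^sup>T *\<^sub>v v)"
      by (rule assoc_mult_mat_vec) (use A inverse that in auto)
    also have "\<dots> = A *\<^sub>v (minv (A\<^sup>T * A) *\<^sub>v (A\<^sup>T *\<^sub>v v))"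
      by (rule assoc_mult_mat_vec) (use A inverse that in auto)
    finally show ?thesis .
  qed
  then show ?thesis
    unfolding is_orth_proj_def
    using A inverse mult_vec_in_col_space[OF A] least_squares_residual_orth[OF A inj] by simp
qed

lemma proj_mat_spec:
  fixes A :: "real mat"
  assumes A: "A \<in> carrier_mat n m"
    and inj: "\<And>x. x \<in> carrier_vec m \<Longrightarrow> A *\<^sub>v x = 0\<^sub>v n \<Longrightarrow> x = 0\<^sub>v m"
  shows "proj_mat A \<in> carrier_mat n n"
    and "\<And>v. v \<in> carrier_vec n \<Longrightarrow> proj_mat A *\<^sub>v v \<in> col_space A"
    and "\<And>v w. v \<in> carrier_vec n \<Longrightarrow> w \<in> col_space A \<Longrightarrow> (v - proj_mat A *\<^sub>v v) \<bullet> w = 0"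
proof -
  have "proj_mat A = (THE P. is_orth_proj A P)"
    unfolding proj_mat_def is_orth_proj_def ..
  also have "\<exists>!P. is_orth_proj A P"
    using is_orth_proj_exists[OF A inj] is_orth_proj_unique[OF A] by blast
  then have "is_orth_proj A (THE P. is_orth_proj A P)" by (rule theI')
  finally show "proj_mat A \<in> carrier_mat n n"
    and "\<And>v. v \<in> carrier_vec n \<Longrightarrow> proj_mat A *\<^sub>v v \<in> col_space A"
    and "\<And>v w. v \<in> carrier_vec n \<Longrightarrow> w \<in> col_space A \<Longrightarrow> (v - proj_mat A *\<^sub>v v) \<bullet> w = 0"
    using A by (auto simp: is_orth_proj_def)
qed

lemma drop_cols_carrier: "X \<in> carrier_mat n d \<Longrightarrow> drop_cols m X \<in> carrier_mat n (d - m)"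
  by (simp add: drop_cols_def)

lemma drop_cols_mult_vec:
  fixes X :: "real mat"
  assumes X: "X \<in> carrier_mat n d" and m: "m \<le> d" and z: "z \<in> carrier_vec (d - m)"
  shows "drop_cols m X *\<^sub>v z = X *\<^sub>v vec d (\<lambda>j. if j < m then 0 else z $ (j - m))"
proof (rule eq_vecI)
  fix r assume "r < dim_vec (X *\<^sub>v vec d (\<lambda>j. if j < m then 0 else z $ (j - m)))"
  then have r: "r < n" using X by simp
  let ?f = "\<lambda>j. X $$ (r, j) * (if j < m then 0 else z $ (j - m))"
  have "(X *\<^sub>v vec d (\<lambda>j. if j < m then 0 else z $ (j - m))) $ r = (\<Sum>j\<in>{0..<d}. ?f j)"
    using X r by (simp add: scalar_prod_def)
  also have "\<dots> = (\<Sum>j\<in>{m..<d}. ?f j)"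
    by (subst sum.atLeastLessThan_concat[of 0 m d, symmetric]) (use m in auto)
  also have "\<dots> = (\<Sum>j\<in>{0..<d - m}. ?f (j + m))"
    using sum.shift_bounds_nat_ivl[of ?f 0 m "d - m"] m by simp
  also have "\<dots> = (drop_cols m X *\<^sub>v z) $ r"
    using X r z m by (simp add: scalar_prod_def drop_cols_def)
  finally show "(drop_cols m X *\<^sub>v z) $ r = (X *\<^sub>v vec d (\<lambda>j. if j < m then 0 else z $ (j - m))) $ r"
    by simp
qed (use X in \<open>simp add: drop_cols_def\<close>)

lemma col_space_drop_colsE:
  fixes X :: "real mat"
  assumes X: "X \<in> carrier_mat n d" and m: "m \<le> d" and w: "w \<in> col_space (drop_cols m X)"
  obtains z where "z \<in> carrier_vec d" and "\<And>j. j < m \<Longrightarrow> z $ j = 0" and "w = X *\<^sub>v z"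
proof -
  obtain z where "z \<in> carrier_vec (d - m)" and "w = drop_cols m X *\<^sub>v z"
    using col_spaceE[OF drop_cols_carrier[OF X] w] .
  with drop_cols_mult_vec[OF X m] m show thesis
    by (intro that[of "vec d (\<lambda>j. if j < m then 0 else z $ (j - m))"]) auto
qed

lemma col_in_col_space_drop_cols:
  fixes X :: "real mat"
  assumes X: "X \<in> carrier_mat n d" and j: "m \<le> j" "j < d"
  shows "col X j \<in> col_space (drop_cols m X)"
proof -
  have "drop_cols m X *\<^sub>v unit_vec (d - m) (j - m) =
      X *\<^sub>v vec d (\<lambda>l. if l < m then 0 else unit_vec (d - m) (j - m) $ (l - m))"
    using drop_cols_mult_vec[OF X _ unit_vec_carrier] j by simp
  also have "vec d (\<lambda>l. if l < m then 0 else unit_vec (d - m) (j - m) $ (l - m)) = unit_vec d j"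
    using j by (intro eq_vecI) (auto simp: unit_vec_def)
  also have "X *\<^sub>v unit_vec d j = col X j"
    using mult_unit_vec_eq_col[OF X] j by simp
  finally show ?thesis
    using mult_vec_in_col_space[OF drop_cols_carrier[OF X] unit_vec_carrier] by metis
qed

lemma drop_cols_mult_vec_eq_zero:
  fixes X :: "real mat"
  assumes X: "X \<in> carrier_mat n d"
    and inj: "\<And>x. x \<in> carrier_vec d \<Longrightarrow> X *\<^sub>v x = 0\<^sub>v n \<Longrightarrow> x = 0\<^sub>v d"
    and m: "m \<le> d" and z: "z \<in> carrier_vec (d - m)" and zero: "drop_cols m X *\<^sub>v z = 0\<^sub>v n"
  shows "z = 0\<^sub>v (d - m)"
proof -
  let ?x = "vec d (\<lambda>j. if j < m then 0 else z $ (j - m))"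
  have "?x = 0\<^sub>v d" using inj zero drop_cols_mult_vec[OF X m z] by simp
  then have "?x $ (j + m) = 0" if "j < d - m" for j using that by simp
  then show ?thesis using z by (intro eq_vecI) auto
qed

lemma first_cols_dims[simp]:
  "dim_row (first_cols k A) = dim_row A" "dim_col (first_cols k A) = k"
  by (simp_all add: first_cols_def)

lemma first_cols_col: "j < k \<Longrightarrow> col (first_cols k A) j = col A j"
  by (intro eq_vecI) (auto simp: first_cols_def col_def)

lemma first_entries_dim[simp]: "dim_vec (first_entries k v) = k"
  by (simp add: first_entries_def)

lemma first_entries_index[simp]: "i < k \<Longrightarrow> first_entries k v $ i = v $ i"
  by (simp add: first_entries_def)

lemma transpose_mult_first_cols_index:
  "i < dim_col W \<Longrightarrow> j < k \<Longrightarrow> (W\<^sup>T * first_cols k X) $$ (i, j) = col W i \<bullet> col X j"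
  by (simp add: first_cols_col)

lemma first_entries_transpose_mult_vec_minus_orth:
  fixes V :: "real mat"
  assumes V: "V \<in> carrier_mat n m" and k: "k \<le> m" and y: "y \<in> carrier_vec n"
    and p: "p \<in> carrier_vec n" and orth: "\<And>w. w \<in> col_space V \<Longrightarrow> w \<bullet> p = 0"
  shows "first_entries k (V\<^sup>T *\<^sub>v (y - p)) = (first_cols k V)\<^sup>T *\<^sub>v y"
proof (rule eq_vecI)
  fix i assume "i < dim_vec ((first_cols k V)\<^sup>T *\<^sub>v y)"
  then have i: "i < k" by simp
  have "col V i \<in> col_space V"
    using mult_unit_vec_eq_col[OF V] mult_vec_in_col_space[OF V unit_vec_carrier] i k
    by (metis order_less_le_trans)
  moreover have "col V i \<in> carrier_vec n" using V by (simp add: carrier_vecI)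
  ultimately have "col V i \<bullet> (y - p) = col V i \<bullet> y"
    using orth scalar_prod_minus_distrib[of "col V i" n y p] y p by simp
  then show "first_entries k (V\<^sup>T *\<^sub>v (y - p)) $ i = ((first_cols k V)\<^sup>T *\<^sub>v y) $ i"
    using V i k by (simp add: first_cols_col)
qed simp

definition col_residual :: "real mat \<Rightarrow> nat \<Rightarrow> real vec" where
  "col_residual X i = (1\<^sub>m (dim_row X) - proj_mat (drop_cols (i + 1) X)) *\<^sub>v col X i"

definition unit_col_residual :: "real mat \<Rightarrow> nat \<Rightarrow> real vec" where
  "unit_col_residual X i = (1 / vnorm (col_residual X i)) \<cdot>\<^sub>v col_residual X i"

context
  fixes X :: "real mat" and n d :: nat
  assumes X: "X \<in> carrier_mat n d"
    and inj: "\<And>x. x \<in> carrier_vec d \<Longrightarrow> X *\<^sub>v x = 0\<^sub>v n \<Longrightarrow> x = 0\<^sub>v d"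
begin

lemma proj_mat_drop_cols:
  assumes "m \<le> d"
  shows "proj_mat (drop_cols m X) \<in> carrier_mat n n"
    and "\<And>v. v \<in> carrier_vec n \<Longrightarrow> proj_mat (drop_cols m X) *\<^sub>v v \<in> col_space (drop_cols m X)"
    and "\<And>v w. v \<in> carrier_vec n \<Longrightarrow> w \<in> col_space (drop_cols m X) \<Longrightarrow>
           (v - proj_mat (drop_cols m X) *\<^sub>v v) \<bullet> w = 0"
proof -
  note proj = proj_mat_spec[OF drop_cols_carrier[OF X] drop_cols_mult_vec_eq_zero[OF X inj assms]]
  show "proj_mat (drop_cols m X) \<in> carrier_mat n n" by (rule proj(1))
  show "\<And>v. v \<in> carrier_vec n \<Longrightarrow> proj_mat (drop_cols m X) *\<^sub>v v \<in> col_space (drop_cols m X)"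
    by (rule proj(2))
  show "\<And>v w. v \<in> carrier_vec n \<Longrightarrow> w \<in> col_space (drop_cols m X) \<Longrightarrow>
      (v - proj_mat (drop_cols m X) *\<^sub>v v) \<bullet> w = 0"
    by (rule proj(3))
qed

lemma col_residual_eq:
  assumes "i < d"
  shows "col_residual X i = col X i - proj_mat (drop_cols (i + 1) X) *\<^sub>v col X i"
  using proj_mat_drop_cols(1)[of "i + 1"] assms X unfolding col_residual_def
  by (subst minus_mult_distrib_mat_vec[of _ n n]) auto

lemma col_residual_carrier:
  assumes i: "i < d"
  shows "col_residual X i \<in> carrier_vec n"
proof -
  have "proj_mat (drop_cols (i + 1) X) \<in> carrier_mat n n"
    using i by (intro proj_mat_drop_cols(1)) simp
  then show ?thesis using col_residual_eq[OF i] X i by simp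
qed

lemma col_residual_orth:
  assumes "i < d" and "w \<in> col_space (drop_cols (i + 1) X)"
  shows "col_residual X i \<bullet> w = 0"
  using proj_mat_drop_cols(3)[of "i + 1" "col X i" w] assms X by (simp add: col_residual_eq)

lemma col_residual_eq_mult_vec:
  assumes i: "i < d"
  obtains z where "z \<in> carrier_vec d" and "z $ i = 1" and "col_residual X i = X *\<^sub>v z"
proof -
  have i1: "i + 1 \<le> d" and Xi: "col X i \<in> carrier_vec n" using i X by auto
  obtain z where z: "z \<in> carrier_vec d" "\<And>j. j < i + 1 \<Longrightarrow> z $ j = 0"
    and proj: "proj_mat (drop_cols (i + 1) X) *\<^sub>v col X i = X *\<^sub>v z"
    using col_space_drop_colsE[OF X i1 proj_mat_drop_cols(2)[OF i1 Xi]] by blast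
  have "col_residual X i = X *\<^sub>v unit_vec d i - X *\<^sub>v z"
    using col_residual_eq[OF i] proj mult_unit_vec_eq_col[OF X i] by simp
  also have "\<dots> = X *\<^sub>v (unit_vec d i - z)"
    using X z by (simp add: mult_minus_distrib_mat_vec)
  finally show thesis using that[of "unit_vec d i - z"] z i by simp
qed

lemma col_residual_nonzero:
  assumes i: "i < d"
  shows "col_residual X i \<noteq> 0\<^sub>v n"
proof
  obtain z where z: "z \<in> carrier_vec d" "z $ i = 1" and "col_residual X i = X *\<^sub>v z"
    using col_residual_eq_mult_vec[OF i] .
  moreover assume "col_residual X i = 0\<^sub>v n"
  ultimately have "z = 0\<^sub>v d" using inj by simp
  then show False using z i by simp
qed

lemma col_residual_dot_col:
  assumes i: "i < d"
  shows "col_residual X i \<bullet> col X i = col_residual X i \<bullet> col_residual X i"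
proof -
  let ?w = "col_residual X i" and ?p = "proj_mat (drop_cols (i + 1) X) *\<^sub>v col X i"
  have P: "proj_mat (drop_cols (i + 1) X) \<in> carrier_mat n n"
    using i by (intro proj_mat_drop_cols(1)) simp
  then have p: "?p \<in> carrier_vec n" using X i by simp
  have "col X i = ?w + ?p" using col_residual_eq[OF i] P X i by (intro eq_vecI) auto
  then have "?w \<bullet> col X i = ?w \<bullet> ?w + ?w \<bullet> ?p"
    using scalar_prod_add_distrib[OF col_residual_carrier[OF i] col_residual_carrier[OF i] p] by simp
  then show ?thesis
    using col_residual_orth[OF i proj_mat_drop_cols(2)] i X by simp
qed

lemma unit_col_residual_in_col_space:
  assumes i: "i < d"
  shows "unit_col_residual X i \<in> col_space X"
proof -
  obtain z where z: "z \<in> carrier_vec d" and "col_residual X i = X *\<^sub>v z"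
    using col_residual_eq_mult_vec[OF i] .
  then have "unit_col_residual X i = X *\<^sub>v ((1 / vnorm (X *\<^sub>v z)) \<cdot>\<^sub>v z)"
    unfolding unit_col_residual_def by (simp add: mult_mat_vec[OF X])
  then show ?thesis using mult_vec_in_col_space[OF X] z by simp
qed

lemma unit_col_residual_orth_col:
  assumes "i < j" and "j < d"
  shows "unit_col_residual X i \<bullet> col X j = 0"
  using col_residual_orth[of i "col X j"] col_in_col_space_drop_cols[OF X, of "i + 1" j]
    col_residual_carrier[of i] assms X
  by (simp add: unit_col_residual_def)

lemma unit_col_residual_dot_col_pos:
  assumes i: "i < d"
  shows "unit_col_residual X i \<bullet> col X i > 0"
proof -
  let ?w = "col_residual X i"
  have "?w \<bullet> ?w \<noteq> 0"
    using scalar_prod_self_eq_zero col_residual_carrier[OF i] col_residual_nonzero[OF i] by blast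
  moreover have "?w \<bullet> ?w \<ge> 0"
    using conjugate_square_ge_0_vec[of ?w] by simp
  ultimately have "?w \<bullet> ?w > 0" by simp
  then show ?thesis
    using col_residual_dot_col[OF i] col_residual_carrier[OF i] X i
    by (simp add: unit_col_residual_def vnorm_def real_div_sqrt)
qed

lemma transpose_mult_first_cols_ols:
  fixes W :: "real mat"
  assumes k: "k \<le> d" and y: "y \<in> carrier_vec n" and W: "W \<in> carrier_mat n k"
    and W_col_space: "\<And>i. i < k \<Longrightarrow> col W i \<in> col_space X"
    and W_orth: "\<And>i j. i < k \<Longrightarrow> k \<le> j \<Longrightarrow> j < d \<Longrightarrow> col W i \<bullet> col X j = 0"
  shows "(W\<^sup>T * first_cols k X) *\<^sub>v first_entries k (minv (X\<^sup>T * X) *\<^sub>v (X\<^sup>T *\<^sub>v y)) = W\<^sup>T *\<^sub>v y"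
proof (rule eq_vecI)
  define \<beta> where "\<beta> = minv (X\<^sup>T * X) *\<^sub>v (X\<^sup>T *\<^sub>v y)"
  have \<beta>: "\<beta> \<in> carrier_vec d"
    using gram_minv_carrier[OF X inj] X y by (simp add: \<beta>_def)
  fix i assume "i < dim_vec (W\<^sup>T *\<^sub>v y)"
  then have i: "i < k" using W by simp
  have Wi: "col W i \<in> carrier_vec n" using W i by simp
  have "((W\<^sup>T * first_cols k X) *\<^sub>v first_entries k \<beta>) $ i =
      (\<Sum>j<k. (W\<^sup>T * first_cols k X) $$ (i, j) * \<beta> $ j)"
    using W i by (simp add: scalar_prod_def lessThan_atLeast0)
  also have "\<dots> = (\<Sum>j<k. (col W i \<bullet> col X j) * \<beta> $ j)"
    using W i by (intro sum.cong refl) (simp add: first_cols_col)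
  also have "\<dots> = (\<Sum>j<d. (col W i \<bullet> col X j) * \<beta> $ j)"
    using W_orth i k by (intro sum.mono_neutral_left) auto
  also have "\<dots> = col W i \<bullet> (X *\<^sub>v \<beta>)"
    using scalar_prod_mult_vec_cols[OF X Wi \<beta>] by simp
  also have "\<dots> = col W i \<bullet> y"
  proof -
    have "(y - X *\<^sub>v \<beta>) \<bullet> col W i = 0"
      using least_squares_residual_orth[OF X inj y W_col_space[OF i]] by (simp add: \<beta>_def)
    then show ?thesis
      using minus_scalar_prod_distrib[OF y _ Wi, of "X *\<^sub>v \<beta>"] comm_scalar_prod[OF Wi] X \<beta> y
      by simp
  qed
  also have "\<dots> = (W\<^sup>T *\<^sub>v y) $ i" using W i by simp
  finally show "((W\<^sup>T * first_cols k X) *\<^sub>v first_entries k \<beta>) $ i = (W\<^sup>T *\<^sub>v y) $ i" .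
qed (use W in simp)

lemma first_cols_unit_col_residuals_ols:
  assumes k: "k \<le> d" and y: "y \<in> carrier_vec n" and V: "dim_row V = n"
    and V_cols: "\<And>i. i < k \<Longrightarrow> col V i = unit_col_residual X i"
  shows "((first_cols k V)\<^sup>T * first_cols k X) *\<^sub>v first_entries k (minv (X\<^sup>T * X) *\<^sub>v (X\<^sup>T *\<^sub>v y)) =
    (first_cols k V)\<^sup>T *\<^sub>v y"
proof (rule transpose_mult_first_cols_ols[OF k y])
  show "first_cols k V \<in> carrier_mat n k" using V by (intro carrier_matI) simp_all
  show "col (first_cols k V) i \<in> col_space X" if "i < k" for i
    using that k V_cols unit_col_residual_in_col_space by (simp add: first_cols_col)
  show "col (first_cols k V) i \<bullet> col X j = 0" if "i < k" "k \<le> j" "j < d" for i j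
    using that V_cols unit_col_residual_orth_col by (simp add: first_cols_col)
qed

lemma det_first_cols_unit_col_residuals_nonzero:
  assumes k: "k \<le> d" and V_cols: "\<And>i. i < k \<Longrightarrow> col V i = unit_col_residual X i"
  shows "det ((first_cols k V)\<^sup>T * first_cols k X) \<noteq> 0"
proof (rule det_lower_triangular_nonzero)
  show "(first_cols k V)\<^sup>T * first_cols k X \<in> carrier_mat k k" by (intro carrier_matI) simp_all
  fix i j assume "i < j" "j < k"
  then show "((first_cols k V)\<^sup>T * first_cols k X) $$ (i, j) = 0"
    using V_cols unit_col_residual_orth_col[of i j] k
    by (simp add: transpose_mult_first_cols_index first_cols_col)
next
  fix i assume "i < k"
  then show "((first_cols k V)\<^sup>T * first_cols k X) $$ (i, i) \<noteq> 0"
    using V_cols unit_col_residual_dot_col_pos[of i] k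
    by (simp add: transpose_mult_first_cols_index first_cols_col)
qed

end

theorem lemmaC5:
  fixes n d k :: nat and X V :: "real mat" and y :: "real vec"
  assumes "n \<ge> d"
    and X: "X \<in> carrier_mat n d"
    and rank: "vec_space.rank n X = d"
    and "1 \<le> k" and "k < d"
    and y: "y \<in> carrier_vec n"
    and sigma_pos: "vnorm ((1\<^sub>m n - proj_mat (drop_cols k X)) *\<^sub>v y) > 0"
    and V: "V \<in> carrier_mat n (n - d + k)"
    and V_orth: "V\<^sup>T * V = 1\<^sub>m (n - d + k)"
    and V_span: "col_space V =
       {w \<in> carrier_vec n. \<forall>z \<in> col_space (drop_cols k X). w \<bullet> z = 0}"
    and V_first: "\<forall>i < k. col V i =
       (1 / vnorm ((1\<^sub>m n - proj_mat (drop_cols (i + 1) X)) *\<^sub>v col X i)) \<cdot>\<^sub>v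
       ((1\<^sub>m n - proj_mat (drop_cols (i + 1) X)) *\<^sub>v col X i)"
  shows "let \<sigma> = vnorm ((1\<^sub>m n - proj_mat (drop_cols k X)) *\<^sub>v y);
             \<beta> = minv (X\<^sup>T * X) *\<^sub>v (X\<^sup>T *\<^sub>v y);
             u = (1 / \<sigma>) \<cdot>\<^sub>v (V\<^sup>T *\<^sub>v (y - proj_mat (drop_cols k X) *\<^sub>v y))
         in first_entries k \<beta> =
            \<sigma> \<cdot>\<^sub>v (minv ((first_cols k V)\<^sup>T * first_cols k X) *\<^sub>v first_entries k u)"
proof -
  have inj: "\<And>x. x \<in> carrier_vec d \<Longrightarrow> X *\<^sub>v x = 0\<^sub>v n \<Longrightarrow> x = 0\<^sub>v d"
    using full_rank_mult_vec_eq_zero[OF X rank] by blast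
  have k: "k \<le> d" using \<open>k < d\<close> by simp
  have V_cols: "\<And>i. i < k \<Longrightarrow> col V i = unit_col_residual X i"
    using V_first X by (simp add: unit_col_residual_def col_residual_def)
  define P where "P = proj_mat (drop_cols k X)"
  define \<sigma> where "\<sigma> = vnorm ((1\<^sub>m n - P) *\<^sub>v y)"
  define \<beta> where "\<beta> = minv (X\<^sup>T * X) *\<^sub>v (X\<^sup>T *\<^sub>v y)"
  define u where "u = (1 / \<sigma>) \<cdot>\<^sub>v (V\<^sup>T *\<^sub>v (y - P *\<^sub>v y))"
  define M where "M = (first_cols k V)\<^sup>T * first_cols k X"
  have Py: "P *\<^sub>v y \<in> carrier_vec n" "P *\<^sub>v y \<in> col_space (drop_cols k X)"
    using proj_mat_drop_cols(1,2)[OF X inj k] y by (simp_all add: P_def)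
  have "M *\<^sub>v first_entries k \<beta> = (first_cols k V)\<^sup>T *\<^sub>v y"
    unfolding M_def \<beta>_def
    by (rule first_cols_unit_col_residuals_ols[OF X inj k y carrier_matD(1)[OF V] V_cols])
  also have "\<dots> = first_entries k (V\<^sup>T *\<^sub>v (y - P *\<^sub>v y))"
    using first_entries_transpose_mult_vec_minus_orth[OF V _ y Py(1)] V_span Py(2) by auto
  also have "\<dots> = \<sigma> \<cdot>\<^sub>v first_entries k u"
    using sigma_pos V by (intro eq_vecI) (auto simp: u_def \<sigma>_def P_def)
  finally have M\<beta>: "M *\<^sub>v first_entries k \<beta> = \<sigma> \<cdot>\<^sub>v first_entries k u" .
  have M: "M \<in> carrier_mat k k" unfolding M_def by (intro carrier_matI) simp_all
  have det: "det M \<noteq> 0"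
    unfolding M_def by (rule det_first_cols_unit_col_residuals_nonzero[OF X inj k V_cols])
  have "first_entries k \<beta> = \<sigma> \<cdot>\<^sub>v (minv M *\<^sub>v first_entries k u)"
    using mult_vec_eq_smultD[OF M det carrier_vecI carrier_vecI M\<beta>] by simp
  then show ?thesis unfolding Let_def P_def \<sigma>_def \<beta>_def u_def M_def .
qed

end
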